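(* Let $H$ be an Abelian group, $X$ a simplicial set, $Z\subset X$ a simplicial subset with inclusion $i:Z\to X$, and $j:X\to X/Z$ the quotient map collapsing $Z$ to a point. Let $\beta:(X/Z)_2\to H$ be a normalized 2-cocycle, let $\eta$ be the $N(H)$-valued twisting function on $X/Z$ associated to $\beta$, and let $\eta|_X=\eta\circ j$. Let $\mathrm{sDist}_\eta(X/Z)$ be the set of twisted distributions on $\pi_\eta: N(H)\times_\eta X/Z\to X/Z$, and let $\mathrm{sDist}_\eta(X,0)$ be the set of twisted distributions $p$ on $N(H)\times_{\eta|_X}X\to X$ such that $p\circ i=\delta^{\varphi_0}$, where $\varphi_0(z)=(0,z)$ is the zero section over $Z$. Then there is a convex isomorphism (a bijection preserving convex combinations) \[ \mathrm{sDist}_\eta(X/Z)\cong \mathrm{sDist}_\eta(X,0). \]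
   Context: Distributions take values in $R=\mathbb{R}_{\ge 0}$: $D(S)$ is the set of finitely supported $p:S\to\mathbb{R}_{\ge0}$ with $\sum_s p(s)=1$, extended levelwise to simplicial sets. For a simplicial map $\pi:E\to Y$, a (twisted) distribution on $\pi$ is a simplicial map $p:Y\to D(E)$ with $D(\pi)\circ p=\delta$ ($\delta$ = delta distribution). $N(H)$ is the nerve of $H$: $N(H)_n=H^n$, $d_0$ drops the first entry, $d_n$ drops the last, $d_i(a_1,\dots,a_n)=(\dots,a_i+a_{i+1},\dots)$ for $0<i<n$, $s_j$ inserts $0$ after the $j$-th entry. A twisting function $\eta=\{\eta_n:Y_n\to N(H)_{n-1}\}$ defines the simplicial set $N(H)\times_\eta Y$ with simplices $N(H)_n\times Y_n$, faces $d_i(g,y)=(d_ig,d_iy)$ for $i>0$, $d_0(g,y)=(d_0g+\eta_n(y),d_0y)$, degeneracies componentwise. A normalized 2-cocycle is $\beta:Y_2\to H$ vanishing on degenerate simplices with $\beta(d_0\sigma)-\beta(d_1\sigma)+\beta(d_2\sigma)-\beta(d_3\sigma)=0$ for $\sigma\in Y_3$; its associated twisting function is $\eta_1=0$, $\eta_2=\beta$, $\eta_n(y)=\big(\beta(d_3\cdots d_n y),\ \eta_{n-1}(d_1y)-\eta_{n-1}(d_0y)\big)\in H\times H^{n-2}$. Since $j\circ i$ factors through a point, $\eta|_X$ vanishes on $Z$, so the restriction of $N(H)\times_{\eta|_X}X$ to $Z$ is $N(H)\times Z$ and $p\circ i$ is a distribution on it. *)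

theory Defs
  imports Complex_Main
begin

text \<open>cells X n is the set of n-simplices; face X n i : X_n -> X_(n-1) (i <= n, n > 0);
  degen X n j : X_n -> X_(n+1) (j <= n).\<close>

record 'a sset =
  cells :: "nat \<Rightarrow> 'a set"
  face  :: "nat \<Rightarrow> nat \<Rightarrow> 'a \<Rightarrow> 'a"
  degen :: "nat \<Rightarrow> nat \<Rightarrow> 'a \<Rightarrow> 'a"

definition simplicial_set :: "'a sset \<Rightarrow> bool" where
  "simplicial_set X \<longleftrightarrow>
     (\<forall>n i x. 0 < n \<and> i \<le> n \<and> x \<in> cells X n \<longrightarrow> face X n i x \<in> cells X (n - 1)) \<and>
     (\<forall>n j x. j \<le> n \<and> x \<in> cells X n \<longrightarrow> degen X n j x \<in> cells X (Suc n)) \<and>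
     (\<forall>n i j x. 2 \<le> n \<and> i < j \<and> j \<le> n \<and> x \<in> cells X n \<longrightarrow>
        face X (n - 1) i (face X n j x) = face X (n - 1) (j - 1) (face X n i x)) \<and>
     (\<forall>n i j x. i < j \<and> j \<le> n \<and> x \<in> cells X n \<longrightarrow>
        face X (Suc n) i (degen X n j x) = degen X (n - 1) (j - 1) (face X n i x)) \<and>
     (\<forall>n j x. j \<le> n \<and> x \<in> cells X n \<longrightarrow>
        face X (Suc n) j (degen X n j x) = x \<and> face X (Suc n) (Suc j) (degen X n j x) = x) \<and>
     (\<forall>n i j x. Suc j < i \<and> i \<le> Suc n \<and> x \<in> cells X n \<longrightarrow>
        face X (Suc n) i (degen X n j x) = degen X (n - 1) j (face X n (i - 1) x)) \<and>
     (\<forall>n i j x. i \<le> j \<and> j \<le> n \<and> x \<in> cells X n \<longrightarrow>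
        degen X (Suc n) i (degen X n j x) = degen X (Suc n) (Suc j) (degen X n i x))"

definition simplicial_subset :: "'a sset \<Rightarrow> (nat \<Rightarrow> 'a set) \<Rightarrow> bool" where
  "simplicial_subset X Z \<longleftrightarrow>
     (\<forall>n. Z n \<subseteq> cells X n) \<and>
     (\<forall>n i z. 0 < n \<and> i \<le> n \<and> z \<in> Z n \<longrightarrow> face X n i z \<in> Z (n - 1)) \<and>
     (\<forall>n j z. j \<le> n \<and> z \<in> Z n \<longrightarrow> degen X n j z \<in> Z (Suc n))"

section \<open>The quotient X/Z (Z collapsed to the point None)\<close>

definition quot_map :: "(nat \<Rightarrow> 'a set) \<Rightarrow> nat \<Rightarrow> 'a \<Rightarrow> 'a option" where
  "quot_map Z n x = (if x \<in> Z n then None else Some x)"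

definition quotient_sset :: "'a sset \<Rightarrow> (nat \<Rightarrow> 'a set) \<Rightarrow> 'a option sset" where
  "quotient_sset X Z =
     \<lparr> cells = (\<lambda>n. insert None (Some ` (cells X n - Z n))),
       face = (\<lambda>n i y. case y of None \<Rightarrow> None
                         | Some x \<Rightarrow> quot_map Z (n - 1) (face X n i x)),
       degen = (\<lambda>n j y. case y of None \<Rightarrow> None
                         | Some x \<Rightarrow> quot_map Z (Suc n) (degen X n j x)) \<rparr>"

text \<open>N(H)_n = H^n, represented as lists of length n.\<close>

definition nerve_face :: "nat \<Rightarrow> nat \<Rightarrow> 'h::ab_group_add list \<Rightarrow> 'h list" where
  "nerve_face n i g =
     (if i = 0 then tl g
      else if i = n then butlast g
      else take (i - 1) g @ [g ! (i - 1) + g ! i] @ drop (i + 1) g)"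

definition nerve_degen :: "nat \<Rightarrow> 'h::ab_group_add list \<Rightarrow> 'h list" where
  "nerve_degen j g = take j g @ [0] @ drop j g"

text \<open>Twisted product N(H) x_eta Y, with eta n : Y_n -> N(H)_(n-1).\<close>

definition twisted_prod :: "'y sset \<Rightarrow> (nat \<Rightarrow> 'y \<Rightarrow> 'h::ab_group_add list) \<Rightarrow> ('h list \<times> 'y) sset" where
  "twisted_prod Y eta =
     \<lparr> cells = (\<lambda>n. {(g, y). length g = n \<and> y \<in> cells Y n}),
       face = (\<lambda>n i (g, y). if i = 0 then (map2 (+) (tl g) (eta n y), face Y n 0 y)
                            else (nerve_face n i g, face Y n i y)),
       degen = (\<lambda>n j (g, y). (nerve_degen j g, degen Y n j y)) \<rparr>"

definition normalized_2_cocycle :: "'y sset \<Rightarrow> ('y \<Rightarrow> 'h::ab_group_add) \<Rightarrow> bool" where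
  "normalized_2_cocycle Y \<beta> \<longleftrightarrow>
     (\<forall>y \<in> cells Y 1. \<forall>j \<le> 1. \<beta> (degen Y 1 j y) = 0) \<and>
     (\<forall>\<sigma> \<in> cells Y 3. \<beta> (face Y 3 0 \<sigma>) - \<beta> (face Y 3 1 \<sigma>) + \<beta> (face Y 3 2 \<sigma>) - \<beta> (face Y 3 3 \<sigma>) = 0)"

fun front2 :: "'y sset \<Rightarrow> nat \<Rightarrow> 'y \<Rightarrow> 'y" where
  "front2 Y n y = (if n \<le> 2 then y else front2 Y (n - 1) (face Y n n y))"

fun cocycle_twist :: "'y sset \<Rightarrow> ('y \<Rightarrow> 'h::ab_group_add) \<Rightarrow> nat \<Rightarrow> 'y \<Rightarrow> 'h list" where
  "cocycle_twist Y \<beta> 0 y = []"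
| "cocycle_twist Y \<beta> (Suc 0) y = []"
| "cocycle_twist Y \<beta> (Suc (Suc 0)) y = [\<beta> y]"
| "cocycle_twist Y \<beta> (Suc (Suc (Suc m))) y =
     \<beta> (front2 Y (Suc (Suc (Suc m))) y) #
       map2 (-) (cocycle_twist Y \<beta> (Suc (Suc m)) (face Y (Suc (Suc (Suc m))) 1 y))
                (cocycle_twist Y \<beta> (Suc (Suc m)) (face Y (Suc (Suc (Suc m))) 0 y))"

definition is_dist :: "'a set \<Rightarrow> ('a \<Rightarrow> real) \<Rightarrow> bool" where
  "is_dist S p \<longleftrightarrow> (\<forall>a. 0 \<le> p a) \<and> finite {a. p a \<noteq> 0} \<and> {a. p a \<noteq> 0} \<subseteq> S
                   \<and> (\<Sum>a\<in>{a. p a \<noteq> 0}. p a) = 1"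

definition pushfwd :: "('a \<Rightarrow> 'b) \<Rightarrow> ('a \<Rightarrow> real) \<Rightarrow> 'b \<Rightarrow> real" where
  "pushfwd f p b = (\<Sum>a\<in>{a. p a \<noteq> 0 \<and> f a = b}. p a)"

definition delta :: "'a \<Rightarrow> 'a \<Rightarrow> real" where
  "delta x = (\<lambda>b. if b = x then 1 else 0)"

text \<open>Twisted distributions on pi : E -> Y: simplicial maps p : Y -> D(E) with D(pi) o p = delta.
  p n y is the distribution on E_n assigned to y in Y_n; off the carrier p is 0 (extensionality).\<close>

definition twisted_dists :: "'e sset \<Rightarrow> 'y sset \<Rightarrow> ('e \<Rightarrow> 'y) \<Rightarrow> (nat \<Rightarrow> 'y \<Rightarrow> 'e \<Rightarrow> real) set" where
  "twisted_dists E Y \<pi> = {p.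
     (\<forall>n y. y \<notin> cells Y n \<longrightarrow> p n y = (\<lambda>_. 0)) \<and>
     (\<forall>n. \<forall>y \<in> cells Y n. is_dist (cells E n) (p n y)) \<and>
     (\<forall>n i. \<forall>y \<in> cells Y n. 0 < n \<and> i \<le> n \<longrightarrow>
        pushfwd (face E n i) (p n y) = p (n - 1) (face Y n i y)) \<and>
     (\<forall>n j. \<forall>y \<in> cells Y n. j \<le> n \<longrightarrow>
        pushfwd (degen E n j) (p n y) = p (Suc n) (degen Y n j y)) \<and>
     (\<forall>n. \<forall>y \<in> cells Y n. pushfwd \<pi> (p n y) = delta y)}"

definition sDist_quot :: "'a sset \<Rightarrow> (nat \<Rightarrow> 'a set) \<Rightarrow> ('a option \<Rightarrow> 'h::ab_group_add)
    \<Rightarrow> (nat \<Rightarrow> 'a option \<Rightarrow> 'h list \<times> 'a option \<Rightarrow> real) set" where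
  "sDist_quot X Z \<beta> =
     twisted_dists (twisted_prod (quotient_sset X Z) (cocycle_twist (quotient_sset X Z) \<beta>))
                   (quotient_sset X Z) snd"

definition sDist_rel :: "'a sset \<Rightarrow> (nat \<Rightarrow> 'a set) \<Rightarrow> ('a option \<Rightarrow> 'h::ab_group_add)
    \<Rightarrow> (nat \<Rightarrow> 'a \<Rightarrow> 'h list \<times> 'a \<Rightarrow> real) set" where
  "sDist_rel X Z \<beta> =
     {p \<in> twisted_dists
            (twisted_prod X (\<lambda>n x. cocycle_twist (quotient_sset X Z) \<beta> n (quot_map Z n x))) X snd.
        \<forall>n. \<forall>z \<in> Z n. p n z = delta (replicate n 0, z)}"

definition convex_comb :: "real \<Rightarrow> (nat \<Rightarrow> 'y \<Rightarrow> 'e \<Rightarrow> real) \<Rightarrow> (nat \<Rightarrow> 'y \<Rightarrow> 'e \<Rightarrow> real)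
    \<Rightarrow> (nat \<Rightarrow> 'y \<Rightarrow> 'e \<Rightarrow> real)" where
  "convex_comb t p q = (\<lambda>n y e. t * p n y e + (1 - t) * q n y e)"

definition convex_iso where
  "convex_iso F A B \<longleftrightarrow> bij_betw F A B \<and>
     (\<forall>p \<in> A. \<forall>q \<in> A. \<forall>t::real. 0 \<le> t \<and> t \<le> 1 \<longrightarrow>
        F (convex_comb t p q) = convex_comb t (F p) (F q))"

end

theory Submission
  imports Defs
begin

(* Because the projection of N(H) x_eta Y is the second coordinate, a twisted distribution is
   the same as a family of distributions on the fibres H^n, compatible with the twisted faces and
   the nerve degeneracies.  Over the base point of X/Z all faces and degeneracies are trivial and
   the normalized cocycle vanishes there, so eta is zero and the degeneracies starting from the
   unique distribution on H^0 force the fibre family to be delta 0.  Hence fibre families on X/Z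
   are exactly the fibre families on X that are delta 0 over Z: pulling back along j and extending
   by delta 0 at the base point are mutually inverse, and both act pointwise, hence are affine. *)

section \<open>Twisted distributions as families of fibre distributions\<close>

definition fiber_dist :: "'y \<Rightarrow> ('h list \<Rightarrow> real) \<Rightarrow> 'h list \<times> 'y \<Rightarrow> real" where
  "fiber_dist y r = (\<lambda>e. if snd e = y then r (fst e) else 0)"

definition fiber_of :: "(nat \<Rightarrow> 'y \<Rightarrow> 'h list \<times> 'y \<Rightarrow> real) \<Rightarrow> nat \<Rightarrow> 'y \<Rightarrow> 'h list \<Rightarrow> real" where
  "fiber_of p n y g = p n y (g, y)"

definition twisted_face ::
    "(nat \<Rightarrow> 'y \<Rightarrow> 'h::ab_group_add list) \<Rightarrow> nat \<Rightarrow> nat \<Rightarrow> 'y \<Rightarrow> 'h list \<Rightarrow> 'h list" where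
  "twisted_face eta n i y g = (if i = 0 then map2 (+) (tl g) (eta n y) else nerve_face n i g)"

definition face_degen_closed :: "'y sset \<Rightarrow> bool" where
  "face_degen_closed Y \<longleftrightarrow>
     (\<forall>n i y. 0 < n \<and> i \<le> n \<and> y \<in> cells Y n \<longrightarrow> face Y n i y \<in> cells Y (n - 1)) \<and>
     (\<forall>n j y. j \<le> n \<and> y \<in> cells Y n \<longrightarrow> degen Y n j y \<in> cells Y (Suc n))"

definition twisted_fiber_dists ::
    "'y sset \<Rightarrow> (nat \<Rightarrow> 'y \<Rightarrow> 'h::ab_group_add list) \<Rightarrow> (nat \<Rightarrow> 'y \<Rightarrow> 'h list \<Rightarrow> real) \<Rightarrow> bool" where
  "twisted_fiber_dists Y eta R \<longleftrightarrow>
     (\<forall>n. \<forall>y \<in> cells Y n. is_dist {g. length g = n} (R n y)) \<and>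
     (\<forall>n i. \<forall>y \<in> cells Y n. 0 < n \<and> i \<le> n \<longrightarrow>
        pushfwd (twisted_face eta n i y) (R n y) = R (n - 1) (face Y n i y)) \<and>
     (\<forall>n j. \<forall>y \<in> cells Y n. j \<le> n \<longrightarrow>
        pushfwd (nerve_degen j) (R n y) = R (Suc n) (degen Y n j y))"

lemma twisted_prod_cells: "cells (twisted_prod Y eta) n = {(g, y). length g = n \<and> y \<in> cells Y n}"
  by (simp add: twisted_prod_def)

lemma twisted_prod_face: "face (twisted_prod Y eta) n i (g, y) = (twisted_face eta n i y g, face Y n i y)"
  by (simp add: twisted_prod_def twisted_face_def)

lemma twisted_prod_degen: "degen (twisted_prod Y eta) n j (g, y) = (nerve_degen j g, degen Y n j y)"
  by (simp add: twisted_prod_def)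

lemma face_degen_closed_faceD:
  "face_degen_closed Y \<Longrightarrow> y \<in> cells Y n \<Longrightarrow> 0 < n \<Longrightarrow> i \<le> n \<Longrightarrow> face Y n i y \<in> cells Y (n - 1)"
  by (simp add: face_degen_closed_def)

lemma face_degen_closed_degenD:
  "face_degen_closed Y \<Longrightarrow> y \<in> cells Y n \<Longrightarrow> j \<le> n \<Longrightarrow> degen Y n j y \<in> cells Y (Suc n)"
  by (simp add: face_degen_closed_def)

lemma simplicial_set_face_degen_closed: "simplicial_set X \<Longrightarrow> face_degen_closed X"
  by (simp add: face_degen_closed_def simplicial_set_def)

lemma inj_Pair_left: "inj_on (\<lambda>g. (g, y)) A"
  by (auto simp: inj_on_def)

lemma support_fiber_dist: "{e. fiber_dist y r e \<noteq> 0} = (\<lambda>g. (g, y)) ` {g. r g \<noteq> 0}"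
  by (auto simp: fiber_dist_def split: if_splits)

lemma sum_support_fiber_dist:
  "(\<Sum>e\<in>(\<lambda>g. (g, y)) ` A. fiber_dist y r e) = (\<Sum>g\<in>A. r g)"
  by (simp add: sum.reindex[OF inj_Pair_left] fiber_dist_def)

lemma fiber_dist_inject: "fiber_dist y r = fiber_dist y s \<longleftrightarrow> r = s"
  by (metis (no_types, lifting) ext fiber_dist_def fst_conv snd_conv)

lemma fiber_dist_delta: "fiber_dist y (delta g) = delta (g, y)"
  by (auto simp: fiber_dist_def delta_def fun_eq_iff)

lemma pushfwd_delta: "pushfwd h (delta a) = delta (h a)"
proof
  fix b
  have "{x. delta a x \<noteq> 0 \<and> h x = b} = (if h a = b then {a} else {})"
    by (auto simp: delta_def)
  then show "pushfwd h (delta a) b = delta (h a) b"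
    by (simp add: pushfwd_def delta_def)
qed

lemma pushfwd_fiber_dist:
  assumes "\<And>g. f (g, y) = (h g, y')"
  shows "pushfwd f (fiber_dist y r) = fiber_dist y' (pushfwd h r)"
proof
  fix b
  show "pushfwd f (fiber_dist y r) b = fiber_dist y' (pushfwd h r) b"
  proof (cases b)
    case (Pair g' y'')
    have "{e. fiber_dist y r e \<noteq> 0 \<and> f e = b}
        = (if y'' = y' then (\<lambda>g. (g, y)) ` {g. r g \<noteq> 0 \<and> h g = g'} else {})"
      using assms Pair by (auto simp: fiber_dist_def split: if_splits)
    then show ?thesis
      using Pair by (simp add: pushfwd_def sum_support_fiber_dist, simp add: fiber_dist_def pushfwd_def)
  qed
qed

lemma is_dist_fiber_dist_iff:
  assumes "y \<in> cells Y n"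
  shows "is_dist (cells (twisted_prod Y eta) n) (fiber_dist y r) \<longleftrightarrow> is_dist {g. length g = n} r"
proof -
  have "finite {e. fiber_dist y r e \<noteq> 0} \<longleftrightarrow> finite {g. r g \<noteq> 0}"
    unfolding support_fiber_dist by (rule finite_image_iff[OF inj_Pair_left])
  moreover have "(\<forall>e. 0 \<le> fiber_dist y r e) \<longleftrightarrow> (\<forall>g. 0 \<le> r g)"
    by (auto simp: fiber_dist_def)
  moreover have "{e. fiber_dist y r e \<noteq> 0} \<subseteq> cells (twisted_prod Y eta) n
      \<longleftrightarrow> {g. r g \<noteq> 0} \<subseteq> {g. length g = n}"
    unfolding support_fiber_dist twisted_prod_cells using assms by auto
  ultimately show ?thesis
    unfolding is_dist_def support_fiber_dist sum_support_fiber_dist by auto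
qed

lemma pushfwd_snd_fiber_dist:
  assumes "is_dist S r"
  shows "pushfwd snd (fiber_dist y r) = delta y"
proof
  fix b
  have "{e. fiber_dist y r e \<noteq> 0 \<and> snd e = b} = (if b = y then (\<lambda>g. (g, y)) ` {g. r g \<noteq> 0} else {})"
    by (auto simp: fiber_dist_def split: if_splits)
  then show "pushfwd snd (fiber_dist y r) b = delta y b"
    using assms by (simp add: pushfwd_def sum_support_fiber_dist delta_def is_dist_def)
qed

lemma is_dist_pushfwd_eq_delta_zero:
  assumes p: "is_dist S p" and "pushfwd f p = delta y" "f a \<noteq> y"
  shows "p a = 0"
proof (rule ccontr)
  assume "p a \<noteq> 0"
  have "finite {b. p b \<noteq> 0 \<and> f b = f a}"
    using p unfolding is_dist_def by (auto intro: finite_subset)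
  with \<open>p a \<noteq> 0\<close> p have "p a \<le> pushfwd f p (f a)"
    unfolding pushfwd_def is_dist_def by (intro member_le_sum) auto
  also have "\<dots> = 0" using assms(2,3) by (simp add: delta_def)
  finally have "p a \<le> 0" .
  moreover have "0 \<le> p a" using p by (simp add: is_dist_def)
  ultimately show False using \<open>p a \<noteq> 0\<close> by linarith
qed

lemma fiber_dist_fiber_of:
  assumes "is_dist S (p n y)" "pushfwd snd (p n y) = delta y"
  shows "p n y = fiber_dist y (fiber_of p n y)"
proof
  fix e :: "_ \<times> _"
  show "p n y e = fiber_dist y (fiber_of p n y) e"
    using is_dist_pushfwd_eq_delta_zero[OF assms, of e]
    by (cases e) (auto simp: fiber_dist_def fiber_of_def)
qed

lemma twisted_dists_fiber_dist:
  assumes "p \<in> twisted_dists (twisted_prod Y eta) Y snd" "y \<in> cells Y n"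
  shows "p n y = fiber_dist y (fiber_of p n y)"
  using assms by (intro fiber_dist_fiber_of[where S = "cells (twisted_prod Y eta) n"])
    (auto simp: twisted_dists_def)

lemma twisted_dists_twisted_fiber_dists:
  assumes Y: "face_degen_closed Y" and p: "p \<in> twisted_dists (twisted_prod Y eta) Y snd"
  shows "twisted_fiber_dists Y eta (fiber_of p)"
  unfolding twisted_fiber_dists_def
proof (intro conjI allI ballI impI)
  fix n y assume y: "y \<in> cells Y n"
  have "is_dist (cells (twisted_prod Y eta) n) (p n y)"
    using p y unfolding twisted_dists_def by blast
  then show "is_dist {g. length g = n} (fiber_of p n y)"
    unfolding twisted_dists_fiber_dist[OF p y] is_dist_fiber_dist_iff[OF y] .
next
  fix n i y assume y: "y \<in> cells Y n" and ni: "0 < n \<and> i \<le> n"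
  have "fiber_dist (face Y n i y) (pushfwd (twisted_face eta n i y) (fiber_of p n y))
      = pushfwd (face (twisted_prod Y eta) n i) (p n y)"
    unfolding twisted_dists_fiber_dist[OF p y]
    by (rule pushfwd_fiber_dist[symmetric]) (simp add: twisted_prod_face)
  also have "\<dots> = p (n - 1) (face Y n i y)"
    using p y ni by (simp add: twisted_dists_def)
  also have "\<dots> = fiber_dist (face Y n i y) (fiber_of p (n - 1) (face Y n i y))"
    using p face_degen_closed_faceD[OF Y y] ni by (blast intro: twisted_dists_fiber_dist)
  finally show "pushfwd (twisted_face eta n i y) (fiber_of p n y) = fiber_of p (n - 1) (face Y n i y)"
    by (simp only: fiber_dist_inject)
next
  fix n j y assume y: "y \<in> cells Y n" and j: "j \<le> n"
  have "fiber_dist (degen Y n j y) (pushfwd (nerve_degen j) (fiber_of p n y))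
      = pushfwd (degen (twisted_prod Y eta) n j) (p n y)"
    unfolding twisted_dists_fiber_dist[OF p y]
    by (rule pushfwd_fiber_dist[symmetric]) (simp add: twisted_prod_degen)
  also have "\<dots> = p (Suc n) (degen Y n j y)"
    using p y j by (simp add: twisted_dists_def)
  also have "\<dots> = fiber_dist (degen Y n j y) (fiber_of p (Suc n) (degen Y n j y))"
    using p face_degen_closed_degenD[OF Y y j] by (rule twisted_dists_fiber_dist)
  finally show "pushfwd (nerve_degen j) (fiber_of p n y) = fiber_of p (Suc n) (degen Y n j y)"
    by (simp only: fiber_dist_inject)
qed

lemma twisted_distsI_fiberwise:
  assumes Y: "face_degen_closed Y"
    and off: "\<And>n y. y \<notin> cells Y n \<Longrightarrow> p n y = (\<lambda>_. 0)"
    and on: "\<And>n y. y \<in> cells Y n \<Longrightarrow> p n y = fiber_dist y (R n y)"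
    and R: "twisted_fiber_dists Y eta R"
  shows "p \<in> twisted_dists (twisted_prod Y eta) Y snd"
  unfolding twisted_dists_def
proof (intro CollectI conjI allI ballI impI)
  fix n y assume y: "y \<in> cells Y n"
  show "is_dist (cells (twisted_prod Y eta) n) (p n y)"
    using R y by (simp add: on[OF y] is_dist_fiber_dist_iff[OF y] twisted_fiber_dists_def)
  then show "pushfwd snd (p n y) = delta y"
    unfolding on[OF y] is_dist_fiber_dist_iff[OF y] by (rule pushfwd_snd_fiber_dist)
next
  fix n i y assume y: "y \<in> cells Y n" and ni: "0 < n \<and> i \<le> n"
  have "pushfwd (face (twisted_prod Y eta) n i) (p n y)
      = fiber_dist (face Y n i y) (pushfwd (twisted_face eta n i y) (R n y))"
    unfolding on[OF y] by (rule pushfwd_fiber_dist) (simp add: twisted_prod_face)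
  then show "pushfwd (face (twisted_prod Y eta) n i) (p n y) = p (n - 1) (face Y n i y)"
    using R y ni on[OF face_degen_closed_faceD[OF Y y]] by (simp add: twisted_fiber_dists_def)
next
  fix n j y assume y: "y \<in> cells Y n" and j: "j \<le> n"
  have "pushfwd (degen (twisted_prod Y eta) n j) (p n y)
      = fiber_dist (degen Y n j y) (pushfwd (nerve_degen j) (R n y))"
    unfolding on[OF y] by (rule pushfwd_fiber_dist) (simp add: twisted_prod_degen)
  then show "pushfwd (degen (twisted_prod Y eta) n j) (p n y) = p (Suc n) (degen Y n j y)"
    using R y j on[OF face_degen_closed_degenD[OF Y y j]] by (simp add: twisted_fiber_dists_def)
qed (use off in blast)

lemma twisted_face_comp: "twisted_face (\<lambda>n x. eta n (f n x)) n i x = twisted_face eta n i (f n x)"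
  by (simp add: twisted_face_def fun_eq_iff)

lemma twisted_fiber_dists_pullback:
  assumes cells: "\<And>n x. x \<in> cells X n \<Longrightarrow> f n x \<in> cells Y n"
    and face: "\<And>n i x. 0 < n \<Longrightarrow> i \<le> n \<Longrightarrow> face Y n i (f n x) = f (n - 1) (face X n i x)"
    and degen: "\<And>n j x. j \<le> n \<Longrightarrow> degen Y n j (f n x) = f (Suc n) (degen X n j x)"
    and R: "twisted_fiber_dists Y eta R"
  shows "twisted_fiber_dists X (\<lambda>n x. eta n (f n x)) (\<lambda>n x. R n (f n x))"
  using R cells unfolding twisted_fiber_dists_def twisted_face_comp
  by (auto simp: face degen simp del: One_nat_def)

section \<open>Fibres over a degenerate base point\<close>

declare front2.simps [simp del]

lemma is_dist_delta: "a \<in> S \<Longrightarrow> is_dist S (delta a)"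
proof -
  assume "a \<in> S"
  moreover have "{b. delta a b \<noteq> 0} = {a}" by (auto simp: delta_def)
  ultimately show ?thesis unfolding is_dist_def by (auto simp: delta_def)
qed

lemma is_dist_singleton_eq_delta:
  assumes "is_dist {a} r"
  shows "r = delta a"
proof -
  have "{b. r b \<noteq> 0} \<subseteq> {a}" "(\<Sum>b\<in>{b. r b \<noteq> 0}. r b) = 1"
    using assms by (auto simp: is_dist_def)
  then have "{b. r b \<noteq> 0} = {a}"
    by (metis sum.empty subset_singletonD zero_neq_one)
  then show ?thesis
    using \<open>(\<Sum>b\<in>{b. r b \<noteq> 0}. r b) = 1\<close> by (auto simp: delta_def fun_eq_iff)
qed

lemma replicate_snoc_append: "replicate a x @ [x] @ replicate b x = replicate (a + b + 1) x"
  by (simp add: replicate_add[symmetric] replicate_append_same[symmetric])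

lemma nerve_face_replicate_zero:
  assumes "0 < i" "i \<le> n"
  shows "nerve_face n i (replicate n (0::'h::ab_group_add)) = replicate (n - 1) 0"
proof (cases "i = n")
  case True
  then show ?thesis using assms by (simp add: nerve_face_def butlast_conv_take)
next
  case False
  then have "nerve_face n i (replicate n (0::'h)) = replicate (i - 1) 0 @ [0] @ replicate (n - (i + 1)) 0"
    using assms by (simp add: nerve_face_def)
  also have "\<dots> = replicate (n - 1) 0"
  proof -
    have "i - 1 + (n - (i + 1)) + 1 = n - 1" using assms False by arith
    then show ?thesis by (simp only: replicate_snoc_append)
  qed
  finally show ?thesis .
qed

lemma nerve_degen_replicate_zero:
  "j \<le> n \<Longrightarrow> nerve_degen j (replicate n (0::'h::ab_group_add)) = replicate (Suc n) 0"
  using replicate_snoc_append[of j "0::'h" "n - j"] by (simp add: nerve_degen_def min_def)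

lemma map2_replicate: "map2 f (replicate n x) (replicate m y) = replicate (min n m) (f x y)"
  by (induction n arbitrary: m) (case_tac m; simp)+

lemma twisted_fiber_dists_fixed_vertex:
  assumes R: "twisted_fiber_dists Y eta R"
    and b: "\<And>n. b \<in> cells Y n" "\<And>n. degen Y n 0 b = b"
  shows "R n b = delta (replicate n 0)"
proof (induction n)
  case 0
  have "{g. length g = 0} = {[]}" by simp
  then have "is_dist {[]} (R 0 b)"
    using R b(1)[of 0] unfolding twisted_fiber_dists_def by metis
  then have "R 0 b = delta []" by (rule is_dist_singleton_eq_delta)
  then show ?case by simp
next
  case (Suc n)
  have "R (Suc n) b = pushfwd (nerve_degen 0) (R n b)"
    using R b by (simp add: twisted_fiber_dists_def)
  then show ?case
    using Suc by (simp add: pushfwd_delta nerve_degen_replicate_zero)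
qed

lemma front2_fixed: "(\<And>n i. face Y n i b = b) \<Longrightarrow> front2 Y n b = b"
  by (induction n) (subst front2.simps; simp)+

lemma cocycle_twist_fixed:
  "(\<And>n i. face Y n i b = b) \<Longrightarrow> \<beta> b = 0 \<Longrightarrow> cocycle_twist Y \<beta> n b = replicate (n - 1) 0"
  by (induction Y \<beta> n b rule: cocycle_twist.induct) (simp_all add: front2_fixed map2_replicate)

lemma twisted_face_replicate_zero:
  assumes "eta n b = replicate (n - 1) 0" "0 < n" "i \<le> n"
  shows "twisted_face eta n i b (replicate n 0) = replicate (n - 1) 0"
  using assms by (cases "i = 0") (simp_all add: twisted_face_def map2_replicate nerve_face_replicate_zero)

lemma quotient_sset_cells: "cells (quotient_sset X Z) n = insert None (Some ` (cells X n - Z n))"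
  by (simp add: quotient_sset_def)

lemma quotient_sset_face_None: "face (quotient_sset X Z) n i None = None"
  by (simp add: quotient_sset_def)

lemma quotient_sset_degen_None: "degen (quotient_sset X Z) n j None = None"
  by (simp add: quotient_sset_def)

lemma None_in_quotient_cells: "None \<in> cells (quotient_sset X Z) n"
  by (simp add: quotient_sset_cells)

lemma quot_map_in_cells: "x \<in> cells X n \<Longrightarrow> quot_map Z n x \<in> cells (quotient_sset X Z) n"
  by (simp add: quotient_sset_cells quot_map_def)

lemma quotient_cells_cases:
  assumes "y \<in> cells (quotient_sset X Z) n"
  obtains "y = None" | x where "x \<in> cells X n" "y = quot_map Z n x"
  using assms by (auto simp: quotient_sset_cells quot_map_def)

lemma face_quot_map:
  assumes "simplicial_subset X Z" "0 < n" "i \<le> n"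
  shows "face (quotient_sset X Z) n i (quot_map Z n x) = quot_map Z (n - 1) (face X n i x)"
  using assms by (auto simp: quotient_sset_def quot_map_def simplicial_subset_def)

lemma degen_quot_map:
  assumes "simplicial_subset X Z" "j \<le> n"
  shows "degen (quotient_sset X Z) n j (quot_map Z n x) = quot_map Z (Suc n) (degen X n j x)"
  using assms by (auto simp: quotient_sset_def quot_map_def simplicial_subset_def)

lemma face_degen_closed_quotient_sset:
  assumes X: "simplicial_set X" and Z: "simplicial_subset X Z"
  shows "face_degen_closed (quotient_sset X Z)"
proof -
  have X': "face_degen_closed X" using X by (rule simplicial_set_face_degen_closed)
  show ?thesis
    unfolding face_degen_closed_def
  proof (intro conjI allI impI)
    fix n i y assume "0 < n \<and> i \<le> n \<and> y \<in> cells (quotient_sset X Z) n"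
    then show "face (quotient_sset X Z) n i y \<in> cells (quotient_sset X Z) (n - 1)"
      by (elim conjE quotient_cells_cases)
        (simp_all add: quotient_sset_face_None None_in_quotient_cells face_quot_map[OF Z]
          quot_map_in_cells face_degen_closed_faceD[OF X'] del: One_nat_def)
  next
    fix n j y assume "j \<le> n \<and> y \<in> cells (quotient_sset X Z) n"
    then show "degen (quotient_sset X Z) n j y \<in> cells (quotient_sset X Z) (Suc n)"
      by (elim conjE quotient_cells_cases)
        (simp_all add: quotient_sset_degen_None None_in_quotient_cells degen_quot_map[OF Z]
          quot_map_in_cells face_degen_closed_degenD[OF X'])
  qed
qed

lemma normalized_2_cocycle_None:
  assumes "normalized_2_cocycle (quotient_sset X Z) \<beta>"
  shows "\<beta> None = 0"
proof -
  have "\<beta> (degen (quotient_sset X Z) 1 0 None) = 0"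
    using assms None_in_quotient_cells[of X Z 1] by (simp add: normalized_2_cocycle_def)
  then show ?thesis by (simp add: quotient_sset_degen_None)
qed

definition quot_pullback :: "'a sset \<Rightarrow> (nat \<Rightarrow> 'a set)
    \<Rightarrow> (nat \<Rightarrow> 'a option \<Rightarrow> 'h list \<times> 'a option \<Rightarrow> real) \<Rightarrow> (nat \<Rightarrow> 'a \<Rightarrow> 'h list \<times> 'a \<Rightarrow> real)" where
  "quot_pullback X Z p =
     (\<lambda>n x. if x \<in> cells X n then fiber_dist x (fiber_of p n (quot_map Z n x)) else (\<lambda>_. 0))"

definition descent_fiber ::
    "(nat \<Rightarrow> 'a \<Rightarrow> 'h list \<times> 'a \<Rightarrow> real) \<Rightarrow> nat \<Rightarrow> 'a option \<Rightarrow> 'h::zero list \<Rightarrow> real" where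
  "descent_fiber q n y = (case y of None \<Rightarrow> delta (replicate n 0) | Some x \<Rightarrow> fiber_of q n x)"

definition quot_descent :: "'a sset \<Rightarrow> (nat \<Rightarrow> 'a set)
    \<Rightarrow> (nat \<Rightarrow> 'a \<Rightarrow> 'h::zero list \<times> 'a \<Rightarrow> real) \<Rightarrow> (nat \<Rightarrow> 'a option \<Rightarrow> 'h list \<times> 'a option \<Rightarrow> real)" where
  "quot_descent X Z q =
     (\<lambda>n y. if y \<in> cells (quotient_sset X Z) n then fiber_dist y (descent_fiber q n y) else (\<lambda>_. 0))"

lemma descent_fiber_None: "descent_fiber q n None = delta (replicate n 0)"
  by (simp add: descent_fiber_def)

lemma quot_pullback_convex_comb:
  "quot_pullback X Z (convex_comb t p q) = convex_comb t (quot_pullback X Z p) (quot_pullback X Z q)"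
  by (simp add: quot_pullback_def convex_comb_def fiber_dist_def fiber_of_def fun_eq_iff)

context
  fixes X :: "'a sset" and Z :: "nat \<Rightarrow> 'a set" and \<beta> :: "'a option \<Rightarrow> 'h::ab_group_add"
  assumes X: "simplicial_set X"
    and Z: "simplicial_subset X Z"
    and \<beta>: "normalized_2_cocycle (quotient_sset X Z) \<beta>"
begin

lemma cocycle_twist_None: "cocycle_twist (quotient_sset X Z) \<beta> n None = replicate (n - 1) 0"
  using normalized_2_cocycle_None[OF \<beta>] by (intro cocycle_twist_fixed) (simp_all add: quotient_sset_face_None)

lemma sDist_quot_fibers:
  "p \<in> sDist_quot X Z \<beta> \<Longrightarrow>
     twisted_fiber_dists (quotient_sset X Z) (cocycle_twist (quotient_sset X Z) \<beta>) (fiber_of p)"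
  unfolding sDist_quot_def
  by (rule twisted_dists_twisted_fiber_dists[OF face_degen_closed_quotient_sset[OF X Z]])

lemma sDist_rel_twisted_dists:
  "q \<in> sDist_rel X Z \<beta> \<Longrightarrow>
     q \<in> twisted_dists (twisted_prod X (\<lambda>n x. cocycle_twist (quotient_sset X Z) \<beta> n (quot_map Z n x))) X snd"
  by (simp add: sDist_rel_def)

lemma sDist_rel_fibers:
  "q \<in> sDist_rel X Z \<beta> \<Longrightarrow>
     twisted_fiber_dists X (\<lambda>n x. cocycle_twist (quotient_sset X Z) \<beta> n (quot_map Z n x)) (fiber_of q)"
  by (rule twisted_dists_twisted_fiber_dists[OF simplicial_set_face_degen_closed[OF X] sDist_rel_twisted_dists])

lemma sDist_quot_fiber_None:
  "p \<in> sDist_quot X Z \<beta> \<Longrightarrow> fiber_of p n None = delta (replicate n 0)"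
  by (rule twisted_fiber_dists_fixed_vertex[OF sDist_quot_fibers])
    (simp_all add: None_in_quotient_cells quotient_sset_degen_None)

lemma descent_fiber_quot_map:
  assumes "q \<in> sDist_rel X Z \<beta>" "x \<in> cells X n"
  shows "descent_fiber q n (quot_map Z n x) = fiber_of q n x"
proof (cases "x \<in> Z n")
  case True
  then have "q n x = delta (replicate n 0, x)" using assms(1) by (simp add: sDist_rel_def)
  then show ?thesis
    using True by (simp add: descent_fiber_def quot_map_def fiber_of_def delta_def fun_eq_iff)
qed (simp add: descent_fiber_def quot_map_def)

lemma quot_pullback_in_sDist_rel:
  assumes p: "p \<in> sDist_quot X Z \<beta>"
  shows "quot_pullback X Z p \<in> sDist_rel X Z \<beta>"
  unfolding sDist_rel_def
proof (intro CollectI conjI allI ballI)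
  show "quot_pullback X Z p
      \<in> twisted_dists (twisted_prod X (\<lambda>n x. cocycle_twist (quotient_sset X Z) \<beta> n (quot_map Z n x))) X snd"
    by (rule twisted_distsI_fiberwise[OF simplicial_set_face_degen_closed[OF X] _ _
          twisted_fiber_dists_pullback[OF quot_map_in_cells face_quot_map[OF Z] degen_quot_map[OF Z]
          sDist_quot_fibers[OF p]]])
      (simp_all add: quot_pullback_def)
next
  fix n z assume "z \<in> Z n"
  moreover have "z \<in> cells X n" using Z \<open>z \<in> Z n\<close> by (auto simp: simplicial_subset_def)
  ultimately show "quot_pullback X Z p n z = delta (replicate n 0, z)"
    by (simp add: quot_pullback_def quot_map_def sDist_quot_fiber_None[OF p] fiber_dist_delta)
qed

lemma descent_fiber_twisted_fiber_dists:
  assumes q: "q \<in> sDist_rel X Z \<beta>"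
  shows "twisted_fiber_dists (quotient_sset X Z) (cocycle_twist (quotient_sset X Z) \<beta>) (descent_fiber q)"
proof -
  have X': "face_degen_closed X" by (rule simplicial_set_face_degen_closed[OF X])
  note fibers = sDist_rel_fibers[OF q, unfolded twisted_fiber_dists_def twisted_face_comp]
  note simps = descent_fiber_None descent_fiber_quot_map[OF q] pushfwd_delta
    quotient_sset_face_None quotient_sset_degen_None face_quot_map[OF Z] degen_quot_map[OF Z]
    face_degen_closed_faceD[OF X'] face_degen_closed_degenD[OF X']
    cocycle_twist_None twisted_face_replicate_zero nerve_degen_replicate_zero fibers
  show ?thesis
    unfolding twisted_fiber_dists_def
  proof (intro conjI allI ballI impI)
    fix n y assume "y \<in> cells (quotient_sset X Z) n"
    then show "is_dist {g. length g = n} (descent_fiber q n y)"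
      by (cases rule: quotient_cells_cases) (simp_all add: simps is_dist_delta)
  next
    fix n i y assume "y \<in> cells (quotient_sset X Z) n" "0 < n \<and> i \<le> n"
    then show "pushfwd (twisted_face (cocycle_twist (quotient_sset X Z) \<beta>) n i y) (descent_fiber q n y)
        = descent_fiber q (n - 1) (face (quotient_sset X Z) n i y)"
      by (elim conjE quotient_cells_cases) (simp_all add: simps del: One_nat_def)
  next
    fix n j y assume "y \<in> cells (quotient_sset X Z) n" "j \<le> n"
    then show "pushfwd (nerve_degen j) (descent_fiber q n y)
        = descent_fiber q (Suc n) (degen (quotient_sset X Z) n j y)"
      by (elim quotient_cells_cases) (simp_all add: simps)
  qed
qed

lemma quot_descent_in_sDist_quot:
  "q \<in> sDist_rel X Z \<beta> \<Longrightarrow> quot_descent X Z q \<in> sDist_quot X Z \<beta>"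
  unfolding sDist_quot_def
  by (rule twisted_distsI_fiberwise[OF face_degen_closed_quotient_sset[OF X Z] _ _
        descent_fiber_twisted_fiber_dists]) (simp_all add: quot_descent_def)

lemma quot_descent_pullback:
  assumes p: "p \<in> sDist_quot X Z \<beta>"
  shows "quot_descent X Z (quot_pullback X Z p) = p"
proof (rule ext, rule ext)
  fix n y
  have td: "p \<in> twisted_dists (twisted_prod (quotient_sset X Z) (cocycle_twist (quotient_sset X Z) \<beta>))
      (quotient_sset X Z) snd"
    using p by (simp add: sDist_quot_def)
  show "quot_descent X Z (quot_pullback X Z p) n y = p n y"
  proof (cases "y \<in> cells (quotient_sset X Z) n")
    case True
    have "descent_fiber (quot_pullback X Z p) n y = fiber_of p n y"
    proof (cases y)
      case None
      then show ?thesis by (simp add: descent_fiber_def sDist_quot_fiber_None[OF p])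
    next
      case (Some x)
      then have "x \<in> cells X n" "x \<notin> Z n" using True by (auto simp: quotient_sset_cells)
      with Some show ?thesis
        by (simp add: descent_fiber_def fiber_of_def quot_pullback_def fiber_dist_def quot_map_def fun_eq_iff)
    qed
    with True show ?thesis by (simp add: quot_descent_def twisted_dists_fiber_dist[OF td True])
  next
    case False
    with td show ?thesis by (simp add: quot_descent_def twisted_dists_def)
  qed
qed

lemma quot_pullback_descent:
  assumes q: "q \<in> sDist_rel X Z \<beta>"
  shows "quot_pullback X Z (quot_descent X Z q) = q"
proof (rule ext, rule ext)
  fix n x
  note td = sDist_rel_twisted_dists[OF q]
  show "quot_pullback X Z (quot_descent X Z q) n x = q n x"
  proof (cases "x \<in> cells X n")
    case True
    then have "fiber_of (quot_descent X Z q) n (quot_map Z n x) = fiber_of q n x"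
      by (simp add: fiber_of_def quot_descent_def fiber_dist_def quot_map_in_cells
          descent_fiber_quot_map[OF q] fun_eq_iff)
    with True show ?thesis by (simp add: quot_pullback_def twisted_dists_fiber_dist[OF td True])
  next
    case False
    with td show ?thesis by (simp add: quot_pullback_def twisted_dists_def)
  qed
qed

lemma convex_iso_quot_pullback:
  "convex_iso (quot_pullback X Z) (sDist_quot X Z \<beta>) (sDist_rel X Z \<beta>)"
proof -
  have "bij_betw (quot_pullback X Z) (sDist_quot X Z \<beta>) (sDist_rel X Z \<beta>)"
    by (rule bij_betw_byWitness[where f' = "quot_descent X Z"])
      (auto simp: quot_descent_pullback quot_pullback_descent quot_pullback_in_sDist_rel
        quot_descent_in_sDist_quot)
  then show ?thesis by (simp add: convex_iso_def quot_pullback_convex_comb)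
qed

end

theorem mainTheorem2:
  fixes X :: "'a sset" and Z :: "nat \<Rightarrow> 'a set" and \<beta> :: "'a option \<Rightarrow> 'h::ab_group_add"
  assumes "simplicial_set X"
    and "simplicial_subset X Z"
    and "normalized_2_cocycle (quotient_sset X Z) \<beta>"
  shows "\<exists>F. convex_iso F (sDist_quot X Z \<beta>) (sDist_rel X Z \<beta>)"
  using convex_iso_quot_pullback[OF assms] by blast

end
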